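(* Let $\mathbb Y$ be a real locally convex Hausdorff topological vector space with topological dual $\mathbb Y^\sharp$, and let $d:\mathbb Y\times\mathbb Y^\sharp\to\mathbb R$ be the duality bilinear form $d(y,y^\sharp)=\langle y,y^\sharp\rangle$. Let $\mathbb X,\mathbb X^\sharp$ be sets and $c:\mathbb X\times\mathbb X^\sharp\to\overline{\mathbb R}$ a coupling. Let $K:\mathbb X\times\mathbb Y\to\overline{\mathbb R}$, $f:\mathbb X\to\overline{\mathbb R}$, and $g:\mathbb Y\to\,]-\infty,+\infty]$. For $x^\sharp\in\mathbb X^\sharp$ let $K_{x^\sharp}(y)=\inf_{x\in\mathbb X}\big((-c(x,x^\sharp))\mathbin{\overset{\cdot}{+}} K(x,y)\big)$. Suppose that (i) $g$ is a proper convex function; (ii) for every $x^\sharp\in\mathbb X^\sharp$, $K_{x^\sharp}$ is a proper convex function; (iii) for every $x^\sharp\in\mathbb X^\sharp$, $g$ is continuous at some point where $K_{x^\sharp}$ is finite. Then: if $f(x)=\inf_{y\in\mathbb Y}\big(K(x,y)\mathbin{\overset{\cdot}{+}} g(y)\big)$ for all $x\in\mathbb X$, it follows that $f^{c}(x^\sharp)=\inf_{y^\sharp\in\mathbb Y^\sharp}\big(K^{c\mathbin{\underset{\cdot}{+}} d}(x^\sharp,y^\sharp)\mathbin{\overset{\cdot}{+}} g^{-d}(y^\sharp)\big)$ for all $x^\sharp\in\mathbb X^\sharp$.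
   Context: $\overline{\mathbb R}=[-\infty,+\infty]$. The Moreau lower addition $\mathbin{\underset{\cdot}{+}}$ is usual addition extended by $(+\infty)\mathbin{\underset{\cdot}{+}}(-\infty)=(-\infty)\mathbin{\underset{\cdot}{+}}(+\infty)=-\infty$; the Moreau upper addition $\mathbin{\overset{\cdot}{+}}$ is usual addition extended by $(+\infty)\mathbin{\overset{\cdot}{+}}(-\infty)=(-\infty)\mathbin{\overset{\cdot}{+}}(+\infty)=+\infty$. $f^{c}(x^\sharp)=\sup_{x}\big(c(x,x^\sharp)\mathbin{\underset{\cdot}{+}}(-f(x))\big)$; $g^{-d}(y^\sharp)=\sup_{y}\big((-\langle y,y^\sharp\rangle)\mathbin{\underset{\cdot}{+}}(-g(y))\big)$; $K^{c\mathbin{\underset{\cdot}{+}} d}(x^\sharp,y^\sharp)=\sup_{x\in\mathbb X,y\in\mathbb Y}\big(c(x,x^\sharp)\mathbin{\underset{\cdot}{+}}\langle y,y^\sharp\rangle\mathbin{\underset{\cdot}{+}}(-K(x,y))\big)$. A function is proper if it never takes the value $-\infty$ and is not identically $+\infty$. *)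

theory Defs
  imports "HOL-Analysis.Analysis" "HOL-Library.Extended_Real"
begin

definition lower_add :: "ereal \<Rightarrow> ereal \<Rightarrow> ereal" (infixl "+\<^sub>l" 65) where
  "lower_add a b = (if (a = \<infinity> \<and> b = -\<infinity>) \<or> (a = -\<infinity> \<and> b = \<infinity>) then -\<infinity> else a + b)"

definition upper_add :: "ereal \<Rightarrow> ereal \<Rightarrow> ereal" (infixl "+\<^sub>u" 65) where
  "upper_add a b = (if (a = \<infinity> \<and> b = -\<infinity>) \<or> (a = -\<infinity> \<and> b = \<infinity>) then \<infinity> else a + b)"

text \<open>Real locally convex topological vector space (Hausdorffness is the class t2_space).\<close>
definition locally_convex_tvs :: "('b::{real_vector,topological_space}) itself \<Rightarrow> bool" where
  "locally_convex_tvs _ \<longleftrightarrow>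
     continuous_on UNIV (\<lambda>p::'b \<times> 'b. fst p + snd p) \<and>
     continuous_on UNIV (\<lambda>p::real \<times> 'b. fst p *\<^sub>R snd p) \<and>
     (\<forall>U::'b set. open U \<and> 0 \<in> U \<longrightarrow> (\<exists>V. open V \<and> convex V \<and> 0 \<in> V \<and> V \<subseteq> U))"

definition topo_dual :: "('b::{real_vector,topological_space} \<Rightarrow> real) set" where
  "topo_dual = {\<phi>. linear \<phi> \<and> continuous_on UNIV \<phi>}"

definition proper_fun :: "('b \<Rightarrow> ereal) \<Rightarrow> bool" where
  "proper_fun h \<longleftrightarrow> (\<forall>y. h y \<noteq> -\<infinity>) \<and> (\<exists>y. h y \<noteq> \<infinity>)"

definition convex_fun :: "('b::real_vector \<Rightarrow> ereal) \<Rightarrow> bool" where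
  "convex_fun h \<longleftrightarrow> convex {(y, r::real). h y \<le> ereal r}"

definition c_conj :: "('a \<Rightarrow> 'c \<Rightarrow> ereal) \<Rightarrow> ('a \<Rightarrow> ereal) \<Rightarrow> 'c \<Rightarrow> ereal" where
  "c_conj c f xs = (SUP x. c x xs +\<^sub>l (- f x))"

definition negd_conj :: "('b \<Rightarrow> ereal) \<Rightarrow> ('b \<Rightarrow> real) \<Rightarrow> ereal" where
  "negd_conj g ys = (SUP y. (- ereal (ys y)) +\<^sub>l (- g y))"

definition cd_conj :: "('a \<Rightarrow> 'c \<Rightarrow> ereal) \<Rightarrow> ('a \<Rightarrow> 'b \<Rightarrow> ereal) \<Rightarrow> 'c \<Rightarrow> ('b \<Rightarrow> real) \<Rightarrow> ereal" where
  "cd_conj c K xs ys = (SUP p. c (fst p) xs +\<^sub>l ereal (ys (snd p)) +\<^sub>l (- K (fst p) (snd p)))"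

end

theory Submission
  imports Defs
begin

(* Write h for the marginal K_{x#} of the statement. Interchanging the two infima turns f^c(x#)
   into -inf_y (h y + g y), and the coupling conjugate K^{c+d}(x#, -) into the Fenchel conjugate of
   h, so the claim is Fenchel-Rockafellar duality for h and g. Weak duality is the Fenchel-Young
   inequality. For the converse, with alpha = inf_y (h y + g y) finite, the perturbation function
   v u = inf_y (h y + g (y + u)) is convex, satisfies v 0 = alpha, and is bounded above near 0
   because g is continuous at a point where h is finite. A Hahn-Banach argument (Zorn's lemma on
   partial linear functionals lying below the strict epigraph of v - alpha) gives a linear psi with
   psi u + alpha <= v u; being bounded above near 0, psi is continuous, and -psi attains the dual
   infimum. *)

section \<open>Moreau additions\<close>

lemma upper_add_simps [simp]:
  "\<infinity> +\<^sub>u b = \<infinity>" "b +\<^sub>u \<infinity> = \<infinity>" "ereal r +\<^sub>u b = ereal r + b" "b +\<^sub>u ereal r = b + ereal r"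
  by (auto simp: upper_add_def)

lemma lower_add_simps [simp]:
  "-\<infinity> +\<^sub>l b = -\<infinity>" "b +\<^sub>l -\<infinity> = -\<infinity>" "ereal r +\<^sub>l b = ereal r + b" "b +\<^sub>l ereal r = b + ereal r"
  by (auto simp: lower_add_def)

lemma uminus_lower_add: "- (a +\<^sub>l b) = - a +\<^sub>u - b"
  by (cases a; cases b; simp add: lower_add_def upper_add_def)

lemma uminus_upper_add: "- (a +\<^sub>u b) = - a +\<^sub>l - b"
  by (cases a; cases b; simp add: lower_add_def upper_add_def)

lemma upper_add_commute: "a +\<^sub>u b = b +\<^sub>u a"
  by (cases a; cases b; simp add: upper_add_def)

lemma upper_add_assoc: "a +\<^sub>u b +\<^sub>u c = a +\<^sub>u (b +\<^sub>u c)"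
  by (cases a; cases b; cases c; simp add: upper_add_def)

lemma lower_add_commute: "a +\<^sub>l b = b +\<^sub>l a"
  by (cases a; cases b; simp add: lower_add_def)

lemma lower_add_assoc: "a +\<^sub>l b +\<^sub>l c = a +\<^sub>l (b +\<^sub>l c)"
  by (cases a; cases b; cases c; simp add: lower_add_def)

lemma upper_add_eq_plus: "a \<noteq> -\<infinity> \<Longrightarrow> b \<noteq> -\<infinity> \<Longrightarrow> a +\<^sub>u b = a + b"
  by (simp add: upper_add_def)

lemma ereal_add_INF: "ereal r + (INF y. F y) = (INF y. ereal r + F y :: ereal)"
proof -
  have neg: "- (ereal r + x) = ereal (- r) + - x" for x
    by (cases x) auto
  have "- (ereal r + (INF y. F y)) = ereal (- r) + (SUP y. - F y)"
    by (simp add: neg ereal_SUP_uminus_eq)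
  also have "\<dots> = (SUP y. - (ereal r + F y))"
    by (simp add: neg SUP_ereal_add_right)
  finally show ?thesis
    by (simp add: ereal_SUP_uminus_eq)
qed

lemma upper_add_INF: "a +\<^sub>u (INF y. F y) = (INF y. a +\<^sub>u F y)"
proof (cases a)
  case (real r)
  then show ?thesis by (simp add: ereal_add_INF)
next
  case PInf
  then show ?thesis by simp
next
  case MInf
  show ?thesis
  proof (cases "(INF y. F y) = \<infinity>")
    case True
    then have "F y = \<infinity>" for y
      by (metis INF_lower UNIV_I top.extremum_uniqueI top_ereal_def)
    then show ?thesis
      using True by simp
  next
    case False
    then obtain y where "F y < \<infinity>"
      by (metis INF_less_iff less_top top_ereal_def)
    then have "a +\<^sub>u F y = -\<infinity>"
      using MInf by (simp add: upper_add_def)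
    then have "(INF y. a +\<^sub>u F y) = -\<infinity>"
      by (metis INF_lower UNIV_I ereal_infty_less_eq(2))
    moreover have "a +\<^sub>u (INF y. F y) = -\<infinity>"
      using MInf False by (auto simp: upper_add_def)
    ultimately show ?thesis by simp
  qed
qed

lemma INF_upper_add: "(INF y. F y) +\<^sub>u a = (INF y. F y +\<^sub>u a)"
  using upper_add_INF[of a F] by (simp add: upper_add_commute)

lemma lower_add_SUP: "a +\<^sub>l (SUP y. F y) = (SUP y. a +\<^sub>l F y)"
proof -
  have "- (a +\<^sub>l (SUP y. F y)) = - a +\<^sub>u (INF y. - F y)"
    by (simp add: uminus_lower_add ereal_INF_uminus_eq)
  also have "\<dots> = (INF y. - (a +\<^sub>l F y))"
    by (simp add: upper_add_INF uminus_lower_add)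
  also have "\<dots> = - (SUP y. a +\<^sub>l F y)"
    by (simp add: ereal_INF_uminus_eq)
  finally show ?thesis
    by simp
qed

section \<open>Conjugates\<close>

definition fenchel_conj :: "('b \<Rightarrow> ereal) \<Rightarrow> ('b \<Rightarrow> real) \<Rightarrow> ereal" where
  "fenchel_conj h \<phi> = (SUP y. ereal (\<phi> y) - h y)"

lemma negd_conj_eq_fenchel_conj: "negd_conj g \<phi> = fenchel_conj g (\<lambda>y. - \<phi> y)"
  by (simp add: negd_conj_def fenchel_conj_def minus_ereal_def)

lemma SUP_prod_curry: "(SUP p. F (fst p) (snd p)) = (SUP y. SUP x. F x y :: 'z::complete_lattice)"
  by (rule antisym) (auto intro!: SUP_least intro: SUP_upper2 SUP_upper2[of "(_, _)"])

lemma cd_conj_eq_fenchel_conj: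
  "cd_conj c K xs \<phi> = fenchel_conj (\<lambda>y. INF x. - c x xs +\<^sub>u K x y) \<phi>"
proof -
  have "ereal (\<phi> y) - (INF x. - c x xs +\<^sub>u K x y) = (SUP x. c x xs +\<^sub>l ereal (\<phi> y) +\<^sub>l - K x y)"
    for y
  proof -
    have "ereal (\<phi> y) - (INF x. - c x xs +\<^sub>u K x y) = ereal (\<phi> y) +\<^sub>l (SUP x. c x xs +\<^sub>l - K x y)"
      unfolding minus_ereal_def ereal_SUP_uminus_eq[symmetric] uminus_upper_add by simp
    also have "\<dots> = (SUP x. c x xs +\<^sub>l ereal (\<phi> y) +\<^sub>l - K x y)"
      by (simp only: lower_add_SUP) (metis lower_add_assoc lower_add_commute)
    finally show ?thesis .
  qed
  moreover have "cd_conj c K xs \<phi> = (SUP y. SUP x. c x xs +\<^sub>l ereal (\<phi> y) +\<^sub>l - K x y)"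
    unfolding cd_conj_def by (rule SUP_prod_curry)
  ultimately show ?thesis
    by (simp add: fenchel_conj_def)
qed

lemma c_conj_INF_convolution:
  assumes f: "\<forall>x. f x = (INF y. K x y +\<^sub>u g y)"
    and g: "\<forall>y. g y \<noteq> -\<infinity>"
    and h: "\<forall>y. (INF x. - c x xs +\<^sub>u K x y) \<noteq> -\<infinity>"
  shows "c_conj c f xs = - (INF y. (INF x. - c x xs +\<^sub>u K x y) + g y)"
proof -
  have "c_conj c f xs = - (INF x. - c x xs +\<^sub>u f x)"
    unfolding c_conj_def ereal_SUP_uminus_eq[symmetric] uminus_upper_add by simp
  also have "(INF x. - c x xs +\<^sub>u f x) = (INF x. INF y. (- c x xs +\<^sub>u K x y) +\<^sub>u g y)"
    using f by (simp add: upper_add_INF upper_add_assoc)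
  also have "\<dots> = (INF y. INF x. (- c x xs +\<^sub>u K x y) +\<^sub>u g y)"
    by (rule INF_commute)
  also have "\<dots> = (INF y. (INF x. - c x xs +\<^sub>u K x y) +\<^sub>u g y)"
    by (simp only: INF_upper_add)
  also have "\<dots> = (INF y. (INF x. - c x xs +\<^sub>u K x y) + g y)"
    using g h by (simp add: upper_add_eq_plus)
  finally show ?thesis .
qed

section \<open>Hahn-Banach extension below a convex set\<close>

(* A linear functional on a subspace of 'b is represented by its graph, a subspace of 'b \<times> real. *)
definition linear_graph_below :: "('b::real_vector \<times> real) set \<Rightarrow> ('b \<times> real) set \<Rightarrow> bool" where
  "linear_graph_below E G \<longleftrightarrow> subspace G \<and> (\<forall>x a b. (x, a) \<in> G \<longrightarrow> (x, b) \<in> G \<longrightarrow> a = b)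
     \<and> (\<forall>x a r. (x, a) \<in> G \<longrightarrow> (x, r) \<in> E \<longrightarrow> a \<le> r)"

lemma linear_graph_below_Union_chain:
  assumes C: "C \<in> chains {G. linear_graph_below E G}" and "C \<noteq> {}"
  shows "linear_graph_below E (\<Union>C)"
proof -
  have lin: "linear_graph_below E G" if "G \<in> C" for G
    using C that by (auto simp: chains_def)
  have common: "\<exists>G\<in>C. p \<in> G \<and> q \<in> G" if "p \<in> \<Union>C" "q \<in> \<Union>C" for p q
    using C that unfolding chains_def chain_subset_def by blast
  show ?thesis
    unfolding linear_graph_below_def subspace_def
  proof (intro conjI ballI allI impI)
    show "0 \<in> \<Union>C"
      using \<open>C \<noteq> {}\<close> lin by (auto simp: linear_graph_below_def subspace_0)
  next
    fix p q assume "p \<in> \<Union>C" "q \<in> \<Union>C"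
    then show "p + q \<in> \<Union>C"
      using common lin by (meson UnionI linear_graph_below_def subspace_add)
  next
    fix p and t :: real assume "p \<in> \<Union>C"
    then show "t *\<^sub>R p \<in> \<Union>C"
      using lin by (meson UnionE UnionI linear_graph_below_def subspace_scale)
  next
    fix x a b assume "(x, a) \<in> \<Union>C" "(x, b) \<in> \<Union>C"
    then show "a = b"
      using common lin by (meson linear_graph_below_def)
  next
    fix x a r assume "(x, a) \<in> \<Union>C" "(x, r) \<in> E"
    then show "a \<le> r"
      using lin by (meson UnionE linear_graph_below_def)
  qed
qed

lemma linear_graph_below_extension_bound:
  assumes G: "linear_graph_below E G" and "convex E"
    and "(m', a') \<in> G" "(m, a) \<in> G" "0 < s" "0 < t"
    and "(m' - s *\<^sub>R x0, r') \<in> E" "(m + t *\<^sub>R x0, r) \<in> E"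
  shows "(a' - r') / s \<le> (r - a) / t"
proof -
  define u v where "u = t / (s + t)" and "v = s / (s + t)"
  have uv: "0 \<le> u" "0 \<le> v" "u + v = 1" "u * s = v * t"
    using \<open>0 < s\<close> \<open>0 < t\<close> by (simp_all add: u_def v_def add_pos_pos divide_simps)
  have "u *\<^sub>R (m' - s *\<^sub>R x0, r') + v *\<^sub>R (m + t *\<^sub>R x0, r) \<in> E"
    using convexD[OF \<open>convex E\<close>] assms(7,8) uv by blast
  then have "(u *\<^sub>R m' + v *\<^sub>R m, u * r' + v * r) \<in> E"
    using uv(4) by (simp add: algebra_simps)
  moreover have "u *\<^sub>R (m', a') + v *\<^sub>R (m, a) \<in> G"
    using G assms(3,4) unfolding linear_graph_below_def by (intro subspace_add subspace_scale) auto
  then have "(u *\<^sub>R m' + v *\<^sub>R m, u * a' + v * a) \<in> G"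
    by simp
  ultimately have "u * a' + v * a \<le> u * r' + v * r"
    using G by (auto simp: linear_graph_below_def)
  then have "(t * a' + s * a) / (s + t) \<le> (t * r' + s * r) / (s + t)"
    by (simp add: u_def v_def add_divide_distrib)
  then have "t * a' + s * a \<le> t * r' + s * r"
    using \<open>0 < s\<close> \<open>0 < t\<close> by (simp add: divide_le_cancel)
  then show ?thesis
    using \<open>0 < s\<close> \<open>0 < t\<close> by (simp add: field_simps)
qed

lemma linear_graph_below_extension_value:
  assumes G: "linear_graph_below E G" and "convex E"
    and absorbing: "\<And>x. \<exists>t>0. \<exists>r. (t *\<^sub>R x, r) \<in> E"
  obtains c where "\<And>m a t r. (m, a) \<in> G \<Longrightarrow> (m + t *\<^sub>R x0, r) \<in> E \<Longrightarrow> a + t * c \<le> r"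
proof -
  \<comment> \<open>\<open>Sup L\<close> separates the lower bounds in \<open>L\<close> from the upper bounds \<open>(r - a) / t\<close>.\<close>
  define L where "L = {(a - r) / s | m a s r. (m, a) \<in> G \<and> 0 < s \<and> (m - s *\<^sub>R x0, r) \<in> E}"
  have G0: "(0, 0) \<in> G"
    using G subspace_0 by (fastforce simp: linear_graph_below_def zero_prod_def)
  have below: "l \<le> (r - a) / t" if "l \<in> L" "(m, a) \<in> G" "0 < t" "(m + t *\<^sub>R x0, r) \<in> E" for l m a t r
    using that linear_graph_below_extension_bound[OF G \<open>convex E\<close>] unfolding L_def by blast
  obtain s r where "0 < s" "(s *\<^sub>R (- x0), r) \<in> E"
    using absorbing by blast
  then have "(0 - r) / s \<in> L"
    unfolding L_def using G0 by force
  then have "L \<noteq> {}"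
    by blast
  obtain t r where "0 < t" "(t *\<^sub>R x0, r) \<in> E"
    using absorbing by blast
  then have "bdd_above L"
    using below[OF _ G0] by (auto simp: bdd_above_def)
  have "a + t * Sup L \<le> r" if "(m, a) \<in> G" "(m + t *\<^sub>R x0, r) \<in> E" for m a t r
  proof (cases t "0::real" rule: linorder_cases)
    case less
    have "m - (- t) *\<^sub>R x0 = m + t *\<^sub>R x0"
      by simp
    then have "(a - r) / (- t) \<in> L"
      unfolding L_def using that less by (metis (mono_tags, lifting) mem_Collect_eq neg_0_less_iff_less)
    then have "(a - r) / (- t) \<le> Sup L"
      using \<open>bdd_above L\<close> by (rule cSup_upper)
    then show ?thesis
      using less by (simp add: field_simps)
  next
    case equal
    then show ?thesis
      using G that by (auto simp: linear_graph_below_def)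
  next
    case greater
    have "Sup L \<le> (r - a) / t"
      using \<open>L \<noteq> {}\<close> below[OF _ that(1) greater that(2)] by (rule cSup_least)
    then show ?thesis
      using greater by (simp add: field_simps)
  qed
  then show ?thesis
    using that by blast
qed

definition graph_extension :: "('b::real_vector \<times> real) set \<Rightarrow> 'b \<Rightarrow> real \<Rightarrow> ('b \<times> real) set" where
  "graph_extension G x0 c = {(m + t *\<^sub>R x0, a + t * c) | m a t. (m, a) \<in> G}"

lemma graph_extensionI: "(m, a) \<in> G \<Longrightarrow> (m + t *\<^sub>R x0, a + t * c) \<in> graph_extension G x0 c"
  unfolding graph_extension_def by blast

lemma subspace_graph_extension:
  assumes "subspace G"
  shows "subspace (graph_extension G x0 c)"
  unfolding subspace_def
proof (intro conjI ballI allI)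
  have "(0, 0) \<in> G"
    using subspace_0[OF assms] by (simp add: zero_prod_def)
  then show "0 \<in> graph_extension G x0 c"
    using graph_extensionI[of 0 0 G 0] by (simp add: zero_prod_def)
next
  fix p q assume "p \<in> graph_extension G x0 c" "q \<in> graph_extension G x0 c"
  then obtain m1 a1 t1 m2 a2 t2 where "p = (m1 + t1 *\<^sub>R x0, a1 + t1 * c)" "(m1, a1) \<in> G"
    "q = (m2 + t2 *\<^sub>R x0, a2 + t2 * c)" "(m2, a2) \<in> G"
    unfolding graph_extension_def by blast
  moreover have "(m1 + m2, a1 + a2) \<in> G"
    using calculation subspace_add[OF assms] by fastforce
  ultimately show "p + q \<in> graph_extension G x0 c"
    using graph_extensionI[of "m1 + m2" "a1 + a2" G "t1 + t2"] by (simp add: algebra_simps)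
next
  fix p and k :: real assume "p \<in> graph_extension G x0 c"
  then obtain m a t where "p = (m + t *\<^sub>R x0, a + t * c)" "(m, a) \<in> G"
    unfolding graph_extension_def by blast
  moreover have "(k *\<^sub>R m, k * a) \<in> G"
    using calculation subspace_scale[OF assms] by fastforce
  ultimately show "k *\<^sub>R p \<in> graph_extension G x0 c"
    using graph_extensionI[of "k *\<^sub>R m" "k * a" G "k * t"] by (simp add: algebra_simps)
qed

lemma graph_extension_single_valued:
  assumes sub: "subspace G" and single: "\<And>x a b. (x, a) \<in> G \<Longrightarrow> (x, b) \<in> G \<Longrightarrow> a = b"
    and x0: "x0 \<notin> fst ` G"
    and "(x, a) \<in> graph_extension G x0 c" "(x, b) \<in> graph_extension G x0 c"
  shows "a = b"
proof -
  obtain m1 a1 t1 m2 a2 t2 where E: "x = m1 + t1 *\<^sub>R x0" "a = a1 + t1 * c" "(m1, a1) \<in> G"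
    "x = m2 + t2 *\<^sub>R x0" "b = a2 + t2 * c" "(m2, a2) \<in> G"
    using assms(4,5) unfolding graph_extension_def by blast
  have "t1 = t2"
  proof (rule ccontr)
    assume "t1 \<noteq> t2"
    define p where "p = (1 / (t1 - t2)) *\<^sub>R ((m2, a2) - (m1, a1))"
    have "p \<in> G"
      unfolding p_def using E(3,6) by (intro subspace_scale[OF sub] subspace_diff[OF sub])
    moreover have "m2 - m1 = (t1 - t2) *\<^sub>R x0"
      using E(1,4) by (simp add: algebra_simps)
    then have "x0 = fst p"
      using \<open>t1 \<noteq> t2\<close> by (simp add: p_def)
    ultimately have "x0 \<in> fst ` G"
      by (rule image_eqI[rotated])
    then show False
      using x0 by blast
  qed
  then show "a = b"
    using E single by auto
qed

lemma linear_graph_below_extend: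
  assumes G: "linear_graph_below E G" and "convex E"
    and absorbing: "\<And>x. \<exists>t>0. \<exists>r. (t *\<^sub>R x, r) \<in> E"
    and x0: "x0 \<notin> fst ` G"
  shows "\<exists>G'. linear_graph_below E G' \<and> G \<subset> G'"
proof -
  obtain c where c: "\<And>m a t r. (m, a) \<in> G \<Longrightarrow> (m + t *\<^sub>R x0, r) \<in> E \<Longrightarrow> a + t * c \<le> r"
    using linear_graph_below_extension_value[OF G \<open>convex E\<close> absorbing] by blast
  have sub: "subspace G" and single: "\<And>x a b. (x, a) \<in> G \<Longrightarrow> (x, b) \<in> G \<Longrightarrow> a = b"
    using G by (auto simp: linear_graph_below_def)
  have "linear_graph_below E (graph_extension G x0 c)"
    unfolding linear_graph_below_def
    using subspace_graph_extension[OF sub] graph_extension_single_valued[OF sub single x0] c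
    by (auto simp: graph_extension_def)
  moreover have "G \<subseteq> graph_extension G x0 c"
    using graph_extensionI[where t = 0] by fastforce
  moreover have "(0, 0) \<in> G"
    using subspace_0[OF sub] by (simp add: zero_prod_def)
  then have "(x0, c) \<in> graph_extension G x0 c - G"
    using graph_extensionI[of 0 0 G 1] x0 by force
  ultimately show ?thesis
    by blast
qed

lemma linear_graph_below_total:
  assumes M: "linear_graph_below E M" and graph: "\<And>x. \<exists>a. (x, a) \<in> M"
  shows "\<exists>\<phi>. linear \<phi> \<and> (\<forall>(x, r)\<in>E. \<phi> x \<le> r)"
proof -
  have "subspace M" and single: "\<And>x a b. (x, a) \<in> M \<Longrightarrow> (x, b) \<in> M \<Longrightarrow> a = b"
    and below: "\<And>x a r. (x, a) \<in> M \<Longrightarrow> (x, r) \<in> E \<Longrightarrow> a \<le> r"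
    using M by (auto simp: linear_graph_below_def)
  define \<phi> where "\<phi> x = (THE a. (x, a) \<in> M)" for x
  have \<phi>_eq: "\<phi> x = a" if "(x, a) \<in> M" for x a
    unfolding \<phi>_def using that single by (blast intro: the_equality)
  have \<phi>_graph: "(x, \<phi> x) \<in> M" for x
    using graph[of x] \<phi>_eq by blast
  have "linear \<phi>"
  proof (rule linearI)
    fix x y
    have "(x, \<phi> x) + (y, \<phi> y) \<in> M"
      by (rule subspace_add[OF \<open>subspace M\<close> \<phi>_graph \<phi>_graph])
    then show "\<phi> (x + y) = \<phi> x + \<phi> y"
      using \<phi>_eq by simp
  next
    fix t :: real and x
    have "t *\<^sub>R (x, \<phi> x) \<in> M"
      by (rule subspace_scale[OF \<open>subspace M\<close> \<phi>_graph])
    then show "\<phi> (t *\<^sub>R x) = t *\<^sub>R \<phi> x"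
      using \<phi>_eq by simp
  qed
  moreover have "\<forall>(x, r)\<in>E. \<phi> x \<le> r"
    using below \<phi>_graph by blast
  ultimately show ?thesis
    by blast
qed

lemma hahn_banach_convex_set:
  fixes E :: "('b::real_vector \<times> real) set"
  assumes "convex E"
    and absorbing: "\<And>x. \<exists>t>0. \<exists>r. (t *\<^sub>R x, r) \<in> E"
    and above_zero: "\<And>r. (0, r) \<in> E \<Longrightarrow> 0 \<le> r"
  shows "\<exists>\<phi>. linear \<phi> \<and> (\<forall>(x, r)\<in>E. \<phi> x \<le> r)"
proof -
  have "linear_graph_below E {0}"
    unfolding linear_graph_below_def
    by (intro conjI subspace_single_0) (use above_zero in \<open>auto simp: zero_prod_def\<close>)
  then have "\<forall>C\<in>chains {G. linear_graph_below E G}. \<exists>U\<in>{G. linear_graph_below E G}. \<forall>X\<in>C. X \<subseteq> U"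
    using linear_graph_below_Union_chain by (metis Sup_upper empty_iff mem_Collect_eq)
  from Zorn_Lemma2[OF this] obtain M where M: "linear_graph_below E M"
    and maximal: "\<And>G. linear_graph_below E G \<Longrightarrow> M \<subseteq> G \<Longrightarrow> G = M"
    by blast
  have "x \<in> fst ` M" for x
    using linear_graph_below_extend[OF M \<open>convex E\<close> absorbing] maximal by blast
  then show ?thesis
    using linear_graph_below_total[OF M] by force
qed

section \<open>Topological vector spaces\<close>

lemma tvs_continuous_on_translation:
  assumes "locally_convex_tvs TYPE('b::{real_vector,topological_space})"
  shows "continuous_on UNIV (\<lambda>z::'b. z + w)"
proof -
  have "continuous_on UNIV (\<lambda>p::'b \<times> 'b. fst p + snd p)"
    using assms by (simp add: locally_convex_tvs_def)
  from continuous_on_compose2[OF this continuous_on_Pair[OF continuous_on_id continuous_on_const]]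
  show ?thesis
    by simp
qed

lemma tvs_continuous_on_scaleR_right:
  assumes "locally_convex_tvs TYPE('b::{real_vector,topological_space})"
  shows "continuous_on UNIV (\<lambda>z::'b. a *\<^sub>R z)"
proof -
  have "continuous_on UNIV (\<lambda>p::real \<times> 'b. fst p *\<^sub>R snd p)"
    using assms by (simp add: locally_convex_tvs_def)
  from continuous_on_compose2[OF this continuous_on_Pair[OF continuous_on_const continuous_on_id]]
  show ?thesis
    by simp
qed

lemma tvs_continuous_on_scaleR_left:
  assumes "locally_convex_tvs TYPE('b::{real_vector,topological_space})"
  shows "continuous_on UNIV (\<lambda>t. t *\<^sub>R (x::'b))"
proof -
  have "continuous_on UNIV (\<lambda>p::real \<times> 'b. fst p *\<^sub>R snd p)"
    using assms by (simp add: locally_convex_tvs_def)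
  from continuous_on_compose2[OF this continuous_on_Pair[OF continuous_on_id continuous_on_const]]
  show ?thesis
    by simp
qed

lemma tvs_continuous_on_scaleR_translation:
  assumes "locally_convex_tvs TYPE('b::{real_vector,topological_space})"
  shows "continuous_on UNIV (\<lambda>z::'b. a *\<^sub>R (z + w))"
  using continuous_on_compose2[OF tvs_continuous_on_scaleR_right[OF assms]
      tvs_continuous_on_translation[OF assms]] by simp

lemma tvs_absorbing:
  assumes "locally_convex_tvs TYPE('b::{real_vector,topological_space})"
    and "open N" "(0::'b) \<in> N"
  shows "\<exists>t>0. t *\<^sub>R x \<in> N"
proof -
  have "open ((\<lambda>t. t *\<^sub>R x) -` N)" "0 \<in> (\<lambda>t. t *\<^sub>R x) -` N"
    using assms by (auto intro: open_vimage tvs_continuous_on_scaleR_left)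
  then obtain e where "0 < e" "ball 0 e \<subseteq> (\<lambda>t. t *\<^sub>R x) -` N"
    using openE by blast
  then show ?thesis
    by (intro exI[of _ "e / 2"]) (auto simp: subset_iff)
qed

lemma tvs_linear_continuous_if_bounded_above:
  assumes tvs: "locally_convex_tvs TYPE('b::{real_vector,topological_space})"
    and "linear (\<psi>::'b \<Rightarrow> real)" and "open N" "0 \<in> N"
    and bounded: "\<And>u. u \<in> N \<Longrightarrow> \<psi> u \<le> C"
  shows "continuous_on UNIV \<psi>"
  unfolding continuous_on_topological
proof (intro ballI allI impI)
  fix y B assume "open B" "\<psi> y \<in> B"
  then obtain e where "0 < e" and e: "ball (\<psi> y) e \<subseteq> B"
    using openE by blast
  define C' where "C' = max C 1"
  have "0 < C'" and bounded': "\<And>u. u \<in> N \<Longrightarrow> \<psi> u \<le> C'"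
    using bounded by (auto simp: C'_def le_max_iff_disj)
  define d where "d = e / (2 * C')"
  have "0 < d"
    using \<open>0 < e\<close> \<open>0 < C'\<close> by (simp add: d_def)
  define A where "A = (\<lambda>z. (1 / d) *\<^sub>R (z + - y)) -` N \<inter> (\<lambda>z. (- 1 / d) *\<^sub>R (z + - y)) -` N"
  have "open A"
    unfolding A_def by (intro open_Int open_vimage tvs_continuous_on_scaleR_translation[OF tvs] \<open>open N\<close>)
  moreover have "y \<in> A"
    using \<open>0 \<in> N\<close> by (simp add: A_def)
  moreover have "\<psi> z \<in> B" if "z \<in> A" for z
  proof -
    have scale: "\<psi> (a *\<^sub>R (z + - y)) = a * (\<psi> z - \<psi> y)" for a
      using \<open>linear \<psi>\<close> by (simp add: linear_scale linear_diff)
    have "(1 / d) *\<^sub>R (z + - y) \<in> N" "(- 1 / d) *\<^sub>R (z + - y) \<in> N"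
      using that by (simp_all add: A_def)
    then have "\<psi> ((1 / d) *\<^sub>R (z + - y)) \<le> C'" "\<psi> ((- 1 / d) *\<^sub>R (z + - y)) \<le> C'"
      using bounded' by blast+
    then have "(1 / d) * (\<psi> z - \<psi> y) \<le> C'" "(- 1 / d) * (\<psi> z - \<psi> y) \<le> C'"
      by (simp_all only: scale)
    then have "\<bar>\<psi> z - \<psi> y\<bar> \<le> d * C'"
      using \<open>0 < d\<close> by (simp add: field_simps abs_le_iff)
    also have "\<dots> < e"
      using \<open>0 < e\<close> \<open>0 < C'\<close> by (simp add: d_def)
    finally show ?thesis
      using e by (auto simp: dist_real_def abs_minus_commute)
  qed
  ultimately show "\<exists>A. open A \<and> y \<in> A \<and> (\<forall>z\<in>UNIV. z \<in> A \<longrightarrow> \<psi> z \<in> B)"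
    by blast
qed

section \<open>Fenchel-Rockafellar duality\<close>

lemma convex_funD:
  assumes "convex_fun F" "F a \<le> ereal r" "F b \<le> ereal s" "0 \<le> u" "0 \<le> v" "u + v = 1"
  shows "F (u *\<^sub>R a + v *\<^sub>R b) \<le> ereal (u * r + v * s)"
proof -
  have "u *\<^sub>R (a, r) + v *\<^sub>R (b, s) \<in> {(y, r). F y \<le> ereal r}"
    using assms by (intro convexD[of "{(y, r). F y \<le> ereal r}"]) (auto simp: convex_fun_def)
  then show ?thesis
    by simp
qed

lemma fenchel_weak_duality:
  assumes h: "\<forall>y. h y \<noteq> -\<infinity>" and g: "\<forall>y. g y \<noteq> -\<infinity>"
  shows "- (INF y. h y + g y) \<le> fenchel_conj h \<phi> +\<^sub>u fenchel_conj g (\<lambda>y. - \<phi> y)"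
proof -
  have "- (h y + g y) \<le> fenchel_conj h \<phi> +\<^sub>u fenchel_conj g (\<lambda>y. - \<phi> y)" for y
  proof (cases "h y = \<infinity> \<or> g y = \<infinity>")
    case True
    then show ?thesis
      using h g by auto
  next
    case False
    then obtain a b where ab: "h y = ereal a" "g y = ereal b"
      using h g by (cases "h y"; cases "g y") auto
    have conj_h: "ereal (\<phi> y - a) \<le> fenchel_conj h \<phi>"
      and conj_g: "ereal (- \<phi> y - b) \<le> fenchel_conj g (\<lambda>y. - \<phi> y)"
      unfolding fenchel_conj_def using ab by (auto intro!: SUP_upper2[where i=y])
    then have "ereal (\<phi> y - a) + ereal (- \<phi> y - b) \<le> fenchel_conj h \<phi> + fenchel_conj g (\<lambda>y. - \<phi> y)"
      by (rule add_mono)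
    moreover have "fenchel_conj h \<phi> +\<^sub>u fenchel_conj g (\<lambda>y. - \<phi> y) = fenchel_conj h \<phi> + fenchel_conj g (\<lambda>y. - \<phi> y)"
      using conj_h conj_g by (intro upper_add_eq_plus) auto
    ultimately show ?thesis
      using ab by simp
  qed
  then show ?thesis
    unfolding ereal_SUP_uminus_eq[symmetric] by (rule SUP_least)
qed

lemma convex_perturbation_strict_epigraph:
  fixes h g :: "'b::real_vector \<Rightarrow> ereal"
  assumes "convex_fun h" "convex_fun g" and h: "\<forall>y. h y \<noteq> -\<infinity>" and g: "\<forall>y. g y \<noteq> -\<infinity>"
  shows "convex {(u, r). \<exists>y. h y + g (y + u) < ereal (r + \<alpha>)}"
proof (rule convexI)
  fix p q :: "'b \<times> real" and l m :: real
  assume "p \<in> {(u, r). \<exists>y. h y + g (y + u) < ereal (r + \<alpha>)}" "q \<in> {(u, r). \<exists>y. h y + g (y + u) < ereal (r + \<alpha>)}"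
    and lm: "0 \<le> l" "0 \<le> m" "l + m = 1"
  then obtain a r y1 b s y2 where pq: "p = (a, r)" "q = (b, s)"
    and "h y1 + g (y1 + a) < ereal (r + \<alpha>)" "h y2 + g (y2 + b) < ereal (s + \<alpha>)"
    by auto
  then obtain H1 G1 H2 G2 where HG: "h y1 = ereal H1" "g (y1 + a) = ereal G1" "H1 + G1 < r + \<alpha>"
    "h y2 = ereal H2" "g (y2 + b) = ereal G2" "H2 + G2 < s + \<alpha>"
    using h g by (cases "h y1"; cases "g (y1 + a)"; cases "h y2"; cases "g (y2 + b)") auto
  define y where "y = l *\<^sub>R y1 + m *\<^sub>R y2"
  have shift: "y + (l *\<^sub>R a + m *\<^sub>R b) = l *\<^sub>R (y1 + a) + m *\<^sub>R (y2 + b)"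
    by (simp add: y_def algebra_simps)
  have "h y + g (y + (l *\<^sub>R a + m *\<^sub>R b)) \<le> ereal (l * H1 + m * H2) + ereal (l * G1 + m * G2)"
    unfolding shift unfolding y_def using HG lm
    by (intro add_mono convex_funD[OF \<open>convex_fun h\<close>] convex_funD[OF \<open>convex_fun g\<close>]) auto
  also have "\<dots> < ereal ((l * r + m * s) + (l + m) * \<alpha>)"
  proof -
    have "l * (H1 + G1 - (r + \<alpha>)) + m * (H2 + G2 - (s + \<alpha>)) < 0"
      using HG by (intro convex_bound_lt lm) auto
    then show ?thesis
      by (simp add: algebra_simps)
  qed
  finally show "l *\<^sub>R p + m *\<^sub>R q \<in> {(u, r). \<exists>y. h y + g (y + u) < ereal (r + \<alpha>)}"
    using pq lm(3) by auto
qed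

lemma isCont_imp_bounded_above_near:
  assumes tvs: "locally_convex_tvs TYPE('b::{real_vector,t2_space})"
    and "isCont (g::'b \<Rightarrow> ereal) y0" "g y0 < C"
  shows "\<exists>N. open N \<and> 0 \<in> N \<and> (\<forall>u\<in>N. g (y0 + u) < C)"
proof -
  obtain S where "open S" "y0 \<in> S" "\<forall>y\<in>S. g y < C"
    using assms(2,3) continuous_at_open[of y0 g] by (metis lessThan_iff open_lessThan)
  moreover have "open ((\<lambda>u. u + y0) -` S)"
    using \<open>open S\<close> by (intro open_vimage tvs_continuous_on_translation[OF tvs])
  ultimately show ?thesis
    by (intro exI[of _ "(\<lambda>u. u + y0) -` S"]) (auto simp: add.commute)
qed

lemma fenchel_conj_sum_le_of_minorant:
  assumes "linear \<psi>" and minorant: "\<And>y u. ereal (\<psi> u + \<alpha>) \<le> h y + g (y + u)"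
    and h: "\<forall>y. h y \<noteq> -\<infinity>" and g: "\<forall>y. g y \<noteq> -\<infinity>"
    and "h y0 = ereal H0" "g y0 = ereal G0"
  shows "fenchel_conj h (\<lambda>y. - \<psi> y) +\<^sub>u fenchel_conj g \<psi> \<le> ereal (- \<alpha>)"
proof -
  have "ereal (\<psi> z) - g z \<le> ereal (\<psi> y - \<alpha>) + h y" for y z
  proof -
    have "ereal (\<psi> (z - y) + \<alpha>) \<le> h y + g z"
      using minorant[where y=y and u="z - y"] by simp
    then show ?thesis
      using \<open>linear \<psi>\<close> h g by (cases "h y"; cases "g z") (auto simp: linear_diff)
  qed
  then have g_le: "fenchel_conj g \<psi> \<le> ereal (\<psi> y - \<alpha>) + h y" for y
    unfolding fenchel_conj_def by (rule SUP_least)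
  moreover have "ereal (\<psi> y0) - g y0 \<le> fenchel_conj g \<psi>"
    unfolding fenchel_conj_def by (rule SUP_upper) simp
  ultimately obtain Gs where Gs: "fenchel_conj g \<psi> = ereal Gs"
    using g_le[of y0] assms(5,6) by (cases "fenchel_conj g \<psi>") auto
  have "ereal (- \<psi> y) - h y \<le> ereal (- \<alpha> - Gs)" for y
    using g_le[of y] h Gs by (cases "h y") auto
  then have "fenchel_conj h (\<lambda>y. - \<psi> y) \<le> ereal (- \<alpha> - Gs)"
    unfolding fenchel_conj_def by (rule SUP_least)
  then show ?thesis
    using Gs by (cases "fenchel_conj h (\<lambda>y. - \<psi> y)") auto
qed

lemma ereal_le_if_strict_upper_bounds:
  assumes "\<And>r. x < ereal r \<Longrightarrow> a \<le> r"
  shows "ereal a \<le> x"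
proof (rule dense_ge)
  fix z assume "x < z"
  then show "ereal a \<le> z"
    using assms by (cases z) auto
qed

lemma perturbation_affine_minorant:
  fixes h g :: "'b::{real_vector,t2_space} \<Rightarrow> ereal"
  assumes tvs: "locally_convex_tvs TYPE('b)"
    and "convex_fun h" "convex_fun g" and h: "\<forall>y. h y \<noteq> -\<infinity>" and g: "\<forall>y. g y \<noteq> -\<infinity>"
    and H0: "h y0 = ereal H0" and G0: "g y0 = ereal G0" and "isCont g y0"
    and lower: "\<And>y. ereal \<alpha> \<le> h y + g y"
  obtains \<psi> where "linear \<psi>" "continuous_on UNIV \<psi>" "\<And>y u. ereal (\<psi> u + \<alpha>) \<le> h y + g (y + u)"
proof -
  \<comment> \<open>the strict epigraph of \<open>(\<lambda>u. INF y. h y + g (y + u)) - \<alpha>\<close>\<close>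
  define E where "E = {(u, r). \<exists>y. h y + g (y + u) < ereal (r + \<alpha>)}"
  have "convex E"
    unfolding E_def using assms(2,3) h g by (rule convex_perturbation_strict_epigraph)
  have above_zero: "0 \<le> r" if "(0, r) \<in> E" for r
    using that lower[THEN le_less_trans] by (fastforce simp: E_def)
  define C where "C = H0 + G0 + 1 - \<alpha>"
  obtain N where N: "open N" "0 \<in> N" and g_bounded: "\<forall>u\<in>N. g (y0 + u) < ereal (G0 + 1)"
    using isCont_imp_bounded_above_near[OF tvs \<open>isCont g y0\<close>, of "ereal (G0 + 1)"] G0 by auto
  have N_in_E: "(u, C) \<in> E" if "u \<in> N" for u
  proof -
    have "h y0 + g (y0 + u) < ereal (C + \<alpha>)"
      using H0 g_bounded that unfolding C_def by (cases "g (y0 + u)") auto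
    then show ?thesis
      unfolding E_def by blast
  qed
  have "\<exists>t>0. \<exists>r. (t *\<^sub>R x, r) \<in> E" for x
    using tvs_absorbing[OF tvs N, of x] N_in_E by blast
  then obtain \<psi> where "linear \<psi>" and \<psi>_below: "\<And>u r. (u, r) \<in> E \<Longrightarrow> \<psi> u \<le> r"
    using hahn_banach_convex_set[OF \<open>convex E\<close> _ above_zero] by blast
  moreover have "continuous_on UNIV \<psi>"
    using tvs_linear_continuous_if_bounded_above[OF tvs \<open>linear \<psi>\<close> N] N_in_E \<psi>_below by blast
  moreover have "ereal (\<psi> u + \<alpha>) \<le> h y + g (y + u)" for y u
  proof (rule ereal_le_if_strict_upper_bounds)
    fix r assume "h y + g (y + u) < ereal r"
    then have "(u, r - \<alpha>) \<in> E"
      unfolding E_def by auto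
    then show "\<psi> u + \<alpha> \<le> r"
      using \<psi>_below by fastforce
  qed
  ultimately show ?thesis
    using that by blast
qed

lemma fenchel_strong_duality:
  fixes h g :: "'b::{real_vector,t2_space} \<Rightarrow> ereal"
  assumes tvs: "locally_convex_tvs TYPE('b)"
    and "convex_fun h" "convex_fun g" and h: "\<forall>y. h y \<noteq> -\<infinity>" and g: "\<forall>y. g y \<noteq> -\<infinity>"
    and H0: "h y0 = ereal H0" and G0: "g y0 = ereal G0" and "isCont g y0"
  shows "(INF \<phi>\<in>topo_dual. fenchel_conj h \<phi> +\<^sub>u fenchel_conj g (\<lambda>y. - \<phi> y)) \<le> - (INF y. h y + g y)"
proof (cases "(INF y. h y + g y) = -\<infinity>")
  case True
  then show ?thesis
    by simp
next
  case False
  moreover have "(INF y. h y + g y) \<le> ereal (H0 + G0)"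
    using INF_lower[of y0 UNIV "\<lambda>y. h y + g y"] H0 G0 by simp
  ultimately obtain \<alpha> where \<alpha>: "(INF y. h y + g y) = ereal \<alpha>"
    by (cases "INF y. h y + g y") auto
  then have "ereal \<alpha> \<le> h y + g y" for y
    by (metis INF_lower UNIV_I)
  then obtain \<psi> where "linear \<psi>" "continuous_on UNIV \<psi>"
    and minorant: "\<And>y u. ereal (\<psi> u + \<alpha>) \<le> h y + g (y + u)"
    using perturbation_affine_minorant[OF assms] by blast
  then have "(\<lambda>y. - \<psi> y) \<in> topo_dual"
    by (simp add: topo_dual_def linear_compose_neg continuous_on_minus)
  then have "(INF \<phi>\<in>topo_dual. fenchel_conj h \<phi> +\<^sub>u fenchel_conj g (\<lambda>y. - \<phi> y))
      \<le> fenchel_conj h (\<lambda>y. - \<psi> y) +\<^sub>u fenchel_conj g \<psi>"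
    by (rule INF_lower[THEN order_trans]) simp
  also have "\<dots> \<le> ereal (- \<alpha>)"
    by (rule fenchel_conj_sum_le_of_minorant[OF \<open>linear \<psi>\<close> minorant h g H0 G0])
  finally show ?thesis
    using \<alpha> by simp
qed

theorem fenchel_rockafellar_duality:
  fixes h g :: "'b::{real_vector,t2_space} \<Rightarrow> ereal"
  assumes "locally_convex_tvs TYPE('b)"
    and "convex_fun h" "convex_fun g" and "\<forall>y. h y \<noteq> -\<infinity>" and "\<forall>y. g y \<noteq> -\<infinity>"
    and "h y0 = ereal H0" and "g y0 = ereal G0" and "isCont g y0"
  shows "- (INF y. h y + g y) = (INF \<phi>\<in>topo_dual. fenchel_conj h \<phi> +\<^sub>u fenchel_conj g (\<lambda>y. - \<phi> y))"
  using fenchel_strong_duality[OF assms] fenchel_weak_duality[OF assms(4,5)]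
  by (auto intro: antisym INF_greatest)

theorem corollary3:
  fixes c :: "'a \<Rightarrow> 'c \<Rightarrow> ereal"
    and K :: "'a \<Rightarrow> 'b::{real_vector,t2_space} \<Rightarrow> ereal"
    and f :: "'a \<Rightarrow> ereal"
    and g :: "'b \<Rightarrow> ereal"
  assumes lctvs: "locally_convex_tvs TYPE('b)"
    and g_range: "\<forall>y. g y \<noteq> -\<infinity>"
    and g_proper: "proper_fun g" and g_convex: "convex_fun g"
    and K_proper: "\<forall>xs. proper_fun (\<lambda>y. INF x. (- c x xs) +\<^sub>u K x y)"
    and K_convex: "\<forall>xs. convex_fun (\<lambda>y. INF x. (- c x xs) +\<^sub>u K x y)"
    and cont: "\<forall>xs. \<exists>y0. \<bar>(INF x. (- c x xs) +\<^sub>u K x y0)\<bar> \<noteq> \<infinity>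
                        \<and> \<bar>g y0\<bar> \<noteq> \<infinity> \<and> isCont g y0"
  shows "(\<forall>x. f x = (INF y. K x y +\<^sub>u g y)) \<longrightarrow>
         (\<forall>xs. c_conj c f xs = (INF ys\<in>topo_dual. cd_conj c K xs ys +\<^sub>u negd_conj g ys))"
proof (intro impI allI)
  assume f: "\<forall>x. f x = (INF y. K x y +\<^sub>u g y)"
  fix xs
  define h where "h = (\<lambda>y. INF x. - c x xs +\<^sub>u K x y)"
  have h_range: "\<forall>y. h y \<noteq> -\<infinity>"
    using K_proper by (simp add: h_def proper_fun_def)
  obtain y0 where "\<bar>h y0\<bar> \<noteq> \<infinity>" "\<bar>g y0\<bar> \<noteq> \<infinity>" and "isCont g y0"
    using cont[rule_format, of xs] unfolding h_def by metis
  then obtain H0 G0 where "h y0 = ereal H0" "g y0 = ereal G0"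
    by (cases "h y0"; cases "g y0") auto
  have "convex_fun h"
    using K_convex by (simp add: h_def)
  have "c_conj c f xs = - (INF y. h y + g y)"
    unfolding h_def
    by (rule c_conj_INF_convolution[where c = c and xs = xs, OF f g_range h_range[unfolded h_def]])
  also have "\<dots> = (INF \<phi>\<in>topo_dual. fenchel_conj h \<phi> +\<^sub>u fenchel_conj g (\<lambda>y. - \<phi> y))"
    by (rule fenchel_rockafellar_duality[OF lctvs \<open>convex_fun h\<close> g_convex h_range g_range
          \<open>h y0 = ereal H0\<close> \<open>g y0 = ereal G0\<close> \<open>isCont g y0\<close>])
  also have "\<dots> = (INF ys\<in>topo_dual. cd_conj c K xs ys +\<^sub>u negd_conj g ys)"
    by (simp add: h_def cd_conj_eq_fenchel_conj negd_conj_eq_fenchel_conj)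
  finally show "c_conj c f xs = (INF ys\<in>topo_dual. cd_conj c K xs ys +\<^sub>u negd_conj g ys)" .
qed

end
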